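(* For integers $0\le d\le r<\min\{m,n\}$ with $d\le\min\{m,n\}-r-1$, there is an isomorphism of $\mathfrak{S}_n\times\mathfrak{S}_m$-modules $R(\mathcal{Z}_{n,m,r})_d\cong R(\mathcal{Z}_{n,m,r+1})_d$.
   Context: Fix positive integers $n,m$. $\mathbb{C}[\mathbf{x}_{n\times m}]$ is the polynomial ring in variables $x_{i,j}$; $\mathfrak{S}_n\times\mathfrak{S}_m$ acts by $(g,h)\cdot x_{i,j}=x_{g(i),h(j)}$. For finite stable $\mathcal{Z}\subseteq\mathrm{Mat}_{n\times m}(\mathbb{C})$, $R(\mathcal{Z})=\mathbb{C}[\mathbf{x}_{n\times m}]/\mathrm{gr}\,\mathbf{I}(\mathcal{Z})$, where $\mathbf{I}(\mathcal{Z})$ is the vanishing ideal and $\mathrm{gr}\,\mathbf{I}(\mathcal{Z})$ the ideal generated by top-degree homogeneous components of its nonzero elements; $R(\mathcal{Z})_d$ is its degree-$d$ component. $\mathcal{Z}_{n,m,r}$ is the set of $n\times m$ $0/1$ matrices with exactly $r$ ones and at most one $1$ in each row and column. *)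

theory Defs
  imports Complex_Main "HOL-Library.Poly_Mapping" "HOL-Combinatorics.Permutations"
begin

text \<open>Polynomials in the variables x_(i,j) over the complex numbers, represented as
  finitely supported maps from monomials (finitely supported exponent vectors indexed by
  variable positions (i,j)) to coefficients.\<close>

type_synonym mono = "(nat \<times> nat) \<Rightarrow>\<^sub>0 nat"
type_synonym cpoly = "mono \<Rightarrow>\<^sub>0 complex"

definition vars :: "cpoly \<Rightarrow> (nat \<times> nat) set" where
  "vars p = (\<Union>t\<in>Poly_Mapping.keys p. Poly_Mapping.keys t)"

definition polyring :: "nat \<Rightarrow> nat \<Rightarrow> cpoly set" where
  "polyring n m = {p. vars p \<subseteq> {..<n} \<times> {..<m}}"

definition tdeg :: "mono \<Rightarrow> nat" where
  "tdeg t = (\<Sum>v\<in>Poly_Mapping.keys t. Poly_Mapping.lookup t v)"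

definition pdeg :: "cpoly \<Rightarrow> nat" where
  "pdeg p = Max (tdeg ` Poly_Mapping.keys p)"

definition top_comp :: "cpoly \<Rightarrow> cpoly" where
  "top_comp p = (\<Sum>t\<in>{t\<in>Poly_Mapping.keys p. tdeg t = pdeg p}. Poly_Mapping.single t (Poly_Mapping.lookup p t))"

definition homogeneous_of :: "nat \<Rightarrow> cpoly \<Rightarrow> bool" where
  "homogeneous_of d p \<longleftrightarrow> (\<forall>t\<in>Poly_Mapping.keys p. tdeg t = d)"

definition cscale :: "complex \<Rightarrow> cpoly \<Rightarrow> cpoly" where
  "cscale c p = Poly_Mapping.single 0 c * p"

definition peval :: "cpoly \<Rightarrow> (nat \<Rightarrow> nat \<Rightarrow> complex) \<Rightarrow> complex" where
  "peval p A = (\<Sum>t\<in>Poly_Mapping.keys p.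
      Poly_Mapping.lookup p t * (\<Prod>v\<in>Poly_Mapping.keys t. A (fst v) (snd v) ^ Poly_Mapping.lookup t v))"

definition rename_mono :: "(nat \<times> nat \<Rightarrow> nat \<times> nat) \<Rightarrow> mono \<Rightarrow> mono" where
  "rename_mono \<phi> t = (\<Sum>v\<in>Poly_Mapping.keys t. Poly_Mapping.single (\<phi> v) (Poly_Mapping.lookup t v))"

definition rename_poly :: "(nat \<times> nat \<Rightarrow> nat \<times> nat) \<Rightarrow> cpoly \<Rightarrow> cpoly" where
  "rename_poly \<phi> p = (\<Sum>t\<in>Poly_Mapping.keys p. Poly_Mapping.single (rename_mono \<phi> t) (Poly_Mapping.lookup p t))"

definition gact :: "(nat \<Rightarrow> nat) \<Rightarrow> (nat \<Rightarrow> nat) \<Rightarrow> cpoly \<Rightarrow> cpoly" where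
  "gact g h p = rename_poly (\<lambda>(i,j). (g i, h j)) p"

text \<open>n x m complex matrices are represented as functions nat => nat => complex
  vanishing outside {..<n} x {..<m}.\<close>
definition matrices :: "nat \<Rightarrow> nat \<Rightarrow> (nat \<Rightarrow> nat \<Rightarrow> complex) set" where
  "matrices n m = {A. \<forall>i j. A i j \<noteq> 0 \<longrightarrow> i < n \<and> j < m}"

definition vanishing_ideal :: "nat \<Rightarrow> nat \<Rightarrow> (nat \<Rightarrow> nat \<Rightarrow> complex) set \<Rightarrow> cpoly set" where
  "vanishing_ideal n m Z = {p \<in> polyring n m. \<forall>A\<in>Z. peval p A = 0}"

inductive_set ideal_gen :: "nat \<Rightarrow> nat \<Rightarrow> cpoly set \<Rightarrow> cpoly set" for n m S where
  zero: "0 \<in> ideal_gen n m S"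
| gen: "g \<in> S \<Longrightarrow> q \<in> polyring n m \<Longrightarrow> q * g \<in> ideal_gen n m S"
| add: "a \<in> ideal_gen n m S \<Longrightarrow> b \<in> ideal_gen n m S \<Longrightarrow> a + b \<in> ideal_gen n m S"

definition gr_ideal :: "nat \<Rightarrow> nat \<Rightarrow> (nat \<Rightarrow> nat \<Rightarrow> complex) set \<Rightarrow> cpoly set" where
  "gr_ideal n m Z = ideal_gen n m (top_comp ` (vanishing_ideal n m Z - {0}))"

text \<open>Degree-d piece of the polynomial ring; R(Z)_d is this space modulo gr I(Z).\<close>
definition hom_piece :: "nat \<Rightarrow> nat \<Rightarrow> nat \<Rightarrow> cpoly set" where
  "hom_piece n m d = {p \<in> polyring n m. homogeneous_of d p}"

definition Zset :: "nat \<Rightarrow> nat \<Rightarrow> nat \<Rightarrow> (nat \<Rightarrow> nat \<Rightarrow> complex) set" where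
  "Zset n m r = {A \<in> matrices n m.
      (\<forall>i j. A i j = 0 \<or> A i j = 1) \<and>
      card {(i,j). i < n \<and> j < m \<and> A i j = 1} = r \<and>
      (\<forall>i j j'. A i j = 1 \<and> A i j' = 1 \<longrightarrow> j = j') \<and>
      (\<forall>i i' j. A i j = 1 \<and> A i' j = 1 \<longrightarrow> i = i')}"

text \<open>An isomorphism of S_n x S_m-modules R(Z1)_d ~= R(Z2)_d, written out on
  representatives: a C-linear map f on the degree-d piece V which maps J1 = gr I(Z1) /\ V
  exactly onto the preimage of J2 (so it induces a well-defined injective linear map
  V/J1 -> V/J2), is surjective modulo J2, and commutes with the group action modulo J2.\<close>
definition Rd_iso :: "nat \<Rightarrow> nat \<Rightarrow> nat \<Rightarrow> (nat \<Rightarrow> nat \<Rightarrow> complex) set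
    \<Rightarrow> (nat \<Rightarrow> nat \<Rightarrow> complex) set \<Rightarrow> bool" where
  "Rd_iso n m d Z1 Z2 \<longleftrightarrow>
    (let V = hom_piece n m d; J1 = gr_ideal n m Z1; J2 = gr_ideal n m Z2 in
     \<exists>f. (\<forall>p\<in>V. f p \<in> V) \<and>
         (\<forall>p\<in>V. \<forall>q\<in>V. f (p + q) = f p + f q) \<and>
         (\<forall>c. \<forall>p\<in>V. f (cscale c p) = cscale c (f p)) \<and>
         (\<forall>p\<in>V. f p \<in> J2 \<longleftrightarrow> p \<in> J1) \<and>
         (\<forall>q\<in>V. \<exists>p\<in>V. f p - q \<in> J2) \<and>
         (\<forall>g h. g permutes {..<n} \<longrightarrow> h permutes {..<m} \<longrightarrow>
            (\<forall>p\<in>V. f (gact g h p) - gact g h (f p) \<in> J2)))"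

end

theory Submission
  imports Defs
begin

text \<open>A homogeneous p of degree d lies in gr I(Z) iff it agrees on Z with a polynomial of
  lower degree. At the 0/1 matrix of a matching B, a polynomial takes the value
  \<Sum>S \<subseteq> B. \<kappa>(S), where \<kappa>(S) is the sum of the coefficients of the monomials with support S.
  Hence p \<in> gr I(Z_{n,m,l}) iff \<kappa> restricted to d-sets extends to a function c on sets of size
  \<le> d whose subset sums vanish on all l-matchings. Rescaling each layer of c by the number of
  d-subsets of an l-set containing it turns these subset sums into sums of a function \<psi>
  over the d-subsets of B, with \<psi> independent of l. Vanishing of such sums on all l-matchings
  propagates to (l+1)-matchings by double counting, and back from (r+1)- to r-matchings by a
  finite difference: extend an r-matching by d+1 new disjoint edges, which fits because
  r + d + 1 \<le> min m n, and take the alternating sum over all partial extensions; every d-set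
  misses one of the new edges and cancels. So the degree-d parts of the two graded ideals
  coincide, and the identity is the required isomorphism.\<close>

definition eval_mono :: "mono \<Rightarrow> (nat \<Rightarrow> nat \<Rightarrow> complex) \<Rightarrow> complex" where
  "eval_mono t A = (\<Prod>v\<in>Poly_Mapping.keys t. A (fst v) (snd v) ^ Poly_Mapping.lookup t v)"

lemma peval_eq_sum_eval_mono:
  "peval p A = (\<Sum>t\<in>Poly_Mapping.keys p. Poly_Mapping.lookup p t * eval_mono t A)"
  by (simp add: peval_def eval_mono_def)

lemma eval_mono_eq_prod_superset:
  assumes "finite K" "Poly_Mapping.keys t \<subseteq> K"
  shows "eval_mono t A = (\<Prod>v\<in>K. A (fst v) (snd v) ^ Poly_Mapping.lookup t v)"
  unfolding eval_mono_def
  by (rule prod.mono_neutral_left) (use assms in \<open>auto simp: in_keys_iff\<close>)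

lemma eval_mono_add: "eval_mono (a + b) A = eval_mono a A * eval_mono b A"
proof -
  let ?K = "Poly_Mapping.keys a \<union> Poly_Mapping.keys b"
  have "eval_mono (a + b) A
      = (\<Prod>v\<in>?K. A (fst v) (snd v) ^ (Poly_Mapping.lookup a v + Poly_Mapping.lookup b v))"
    using eval_mono_eq_prod_superset[of ?K "a + b"] keys_add[of a b] by (simp add: lookup_add)
  also have "\<dots> = (\<Prod>v\<in>?K. A (fst v) (snd v) ^ Poly_Mapping.lookup a v)
                * (\<Prod>v\<in>?K. A (fst v) (snd v) ^ Poly_Mapping.lookup b v)"
    by (simp add: power_add prod.distrib)
  also have "\<dots> = eval_mono a A * eval_mono b A"
    using eval_mono_eq_prod_superset[of ?K a] eval_mono_eq_prod_superset[of ?K b] by simp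
  finally show ?thesis .
qed

lemma peval_eq_sum_superset:
  assumes "finite T" "Poly_Mapping.keys p \<subseteq> T"
  shows "peval p A = (\<Sum>t\<in>T. Poly_Mapping.lookup p t * eval_mono t A)"
  unfolding peval_eq_sum_eval_mono
  by (rule sum.mono_neutral_left) (use assms in \<open>auto simp: in_keys_iff\<close>)

lemma peval_add: "peval (p + q) A = peval p A + peval q A"
proof -
  let ?T = "Poly_Mapping.keys p \<union> Poly_Mapping.keys q"
  have "peval (p + q) A = (\<Sum>t\<in>?T. Poly_Mapping.lookup (p + q) t * eval_mono t A)"
    using peval_eq_sum_superset[of ?T "p + q"] keys_add[of p q] by simp
  also have "\<dots> = (\<Sum>t\<in>?T. Poly_Mapping.lookup p t * eval_mono t A)
                + (\<Sum>t\<in>?T. Poly_Mapping.lookup q t * eval_mono t A)"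
    by (simp add: lookup_add distrib_right sum.distrib)
  also have "\<dots> = peval p A + peval q A"
    using peval_eq_sum_superset[of ?T p] peval_eq_sum_superset[of ?T q] by simp
  finally show ?thesis .
qed

lemma peval_uminus: "peval (- p) A = - peval p A"
  unfolding peval_eq_sum_eval_mono by (simp add: sum_negf)

lemma peval_diff: "peval (p - q) A = peval p A - peval q A"
  using peval_add[of p "- q" A] peval_uminus[of q A] by simp

lemma peval_single: "peval (Poly_Mapping.single t c) A = c * eval_mono t A"
  by (simp add: peval_eq_sum_eval_mono)

lemma peval_sum: "peval (sum f I) A = (\<Sum>i\<in>I. peval (f i) A)"
proof (induction I rule: infinite_finite_induct)
  case (insert x F)
  then show ?case by (simp add: peval_add)
qed (auto simp: peval_def)

lemma poly_mapping_eq_sum_single: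
  "(p :: 'a \<Rightarrow>\<^sub>0 'b :: comm_monoid_add)
     = (\<Sum>t\<in>Poly_Mapping.keys p. Poly_Mapping.single t (Poly_Mapping.lookup p t))"
  by (rule poly_mapping_eqI) (simp add: lookup_sum lookup_single when_def sum.delta in_keys_iff)

lemma times_poly_mapping_eq_sum:
  "(q :: cpoly) * g = (\<Sum>a\<in>Poly_Mapping.keys q. \<Sum>b\<in>Poly_Mapping.keys g.
       Poly_Mapping.single (a + b) (Poly_Mapping.lookup q a * Poly_Mapping.lookup g b))"
  by (subst (1 2) poly_mapping_eq_sum_single) (simp add: sum_product mult_single)

lemma peval_mult: "peval (p * q) A = peval p A * peval q A"
proof -
  have "peval (p * q) A = (\<Sum>a\<in>Poly_Mapping.keys p. \<Sum>b\<in>Poly_Mapping.keys q.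
       Poly_Mapping.lookup p a * Poly_Mapping.lookup q b * eval_mono (a + b) A)"
    by (subst times_poly_mapping_eq_sum) (simp add: peval_sum peval_single)
  also have "\<dots> = (\<Sum>a\<in>Poly_Mapping.keys p. \<Sum>b\<in>Poly_Mapping.keys q.
       (Poly_Mapping.lookup p a * eval_mono a A) * (Poly_Mapping.lookup q b * eval_mono b A))"
    by (simp add: eval_mono_add mult_ac)
  also have "\<dots> = peval p A * peval q A"
    by (simp add: peval_eq_sum_eval_mono sum_product)
  finally show ?thesis .
qed

definition hcomp :: "nat \<Rightarrow> cpoly \<Rightarrow> cpoly" where
  "hcomp d p = (\<Sum>t\<in>{t\<in>Poly_Mapping.keys p. tdeg t = d}. Poly_Mapping.single t (Poly_Mapping.lookup p t))"

lemma lookup_hcomp: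
  "Poly_Mapping.lookup (hcomp d p) s = (if tdeg s = d then Poly_Mapping.lookup p s else 0)"
  by (simp add: hcomp_def lookup_sum lookup_single when_def sum.delta in_keys_iff)

lemma keys_hcomp: "Poly_Mapping.keys (hcomp d p) = {t\<in>Poly_Mapping.keys p. tdeg t = d}"
  by (auto simp: in_keys_iff lookup_hcomp split: if_splits)

lemma top_comp_eq_hcomp: "top_comp p = hcomp (pdeg p) p"
  by (simp add: top_comp_def hcomp_def)

lemma homogeneous_of_hcomp: "homogeneous_of d (hcomp d p)"
  by (simp add: homogeneous_of_def keys_hcomp)

lemma hcomp_add: "hcomp d (p + q) = hcomp d p + hcomp d q"
  by (rule poly_mapping_eqI) (simp add: lookup_hcomp lookup_add)

lemma hcomp_zero [simp]: "hcomp d 0 = 0"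
  by (rule poly_mapping_eqI) (simp add: lookup_hcomp)

lemma hcomp_homogeneous: "homogeneous_of d p \<Longrightarrow> hcomp d p = p"
  by (rule poly_mapping_eqI) (auto simp: lookup_hcomp homogeneous_of_def in_keys_iff)

lemma tdeg_eq_sum_superset:
  assumes "finite K" "Poly_Mapping.keys t \<subseteq> K"
  shows "tdeg t = (\<Sum>v\<in>K. Poly_Mapping.lookup t v)"
  unfolding tdeg_def
  by (rule sum.mono_neutral_left) (use assms in \<open>auto simp: in_keys_iff\<close>)

lemma tdeg_add: "tdeg (a + b) = tdeg a + tdeg b"
proof -
  let ?K = "Poly_Mapping.keys a \<union> Poly_Mapping.keys b"
  show ?thesis
    using tdeg_eq_sum_superset[of ?K "a + b"] tdeg_eq_sum_superset[of ?K a]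
      tdeg_eq_sum_superset[of ?K b] keys_add[of a b]
    by (simp add: lookup_add sum.distrib)
qed

lemma card_keys_le_tdeg: "card (Poly_Mapping.keys t) \<le> tdeg t"
proof -
  have "card (Poly_Mapping.keys t) = (\<Sum>v\<in>Poly_Mapping.keys t. 1)" by simp
  also have "\<dots> \<le> tdeg t"
    unfolding tdeg_def by (rule sum_mono) (auto simp: in_keys_iff)
  finally show ?thesis .
qed

lemma tdeg_le_pdeg: "t \<in> Poly_Mapping.keys p \<Longrightarrow> tdeg t \<le> pdeg p"
  unfolding pdeg_def by (rule Max_ge) auto

lemma lookup_times_eq_sum:
  "Poly_Mapping.lookup ((q :: cpoly) * g) s = (\<Sum>a\<in>Poly_Mapping.keys q. \<Sum>b\<in>Poly_Mapping.keys g.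
       (if s = a + b then Poly_Mapping.lookup q a * Poly_Mapping.lookup g b else 0))"
  by (subst times_poly_mapping_eq_sum) (simp add: lookup_sum lookup_single when_def eq_commute)

lemma hcomp_times_homogeneous:
  assumes g: "homogeneous_of e g"
  shows "hcomp d (q * g) = (if e \<le> d then hcomp (d - e) q * g else 0)"
proof (rule poly_mapping_eqI)
  fix s
  have summand: "(if tdeg s = d then (if s = a + b then Poly_Mapping.lookup q a * Poly_Mapping.lookup g b else 0) else 0)
     = (if e \<le> d then (if s = a + b then Poly_Mapping.lookup (hcomp (d - e) q) a * Poly_Mapping.lookup g b else 0) else 0)"
    if "b \<in> Poly_Mapping.keys g" for a b
  proof -
    have "tdeg b = e" using g that by (simp add: homogeneous_of_def)
    then show ?thesis by (auto simp: lookup_hcomp tdeg_add)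
  qed
  have "Poly_Mapping.keys (hcomp (d - e) q) \<subseteq> Poly_Mapping.keys q"
    by (auto simp: keys_hcomp)
  then have "Poly_Mapping.lookup (hcomp (d - e) q * g) s = (\<Sum>a\<in>Poly_Mapping.keys q. \<Sum>b\<in>Poly_Mapping.keys g.
       (if s = a + b then Poly_Mapping.lookup (hcomp (d - e) q) a * Poly_Mapping.lookup g b else 0))"
    unfolding lookup_times_eq_sum
    by (intro sum.mono_neutral_left) (auto simp: in_keys_iff intro!: sum.neutral)
  then show "Poly_Mapping.lookup (hcomp d (q * g)) s
      = Poly_Mapping.lookup (if e \<le> d then hcomp (d - e) q * g else 0) s"
    using summand by (auto simp: lookup_hcomp lookup_times_eq_sum intro!: sum.cong)
qed

lemma vars_add: "vars (p + q) \<subseteq> vars p \<union> vars q"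
  unfolding vars_def using keys_add[of p q] by auto

lemma vars_diff: "vars (p - q) \<subseteq> vars p \<union> vars q"
  unfolding vars_def using keys_diff[of p q] by auto

lemma vars_mult: "vars ((p :: cpoly) * q) \<subseteq> vars p \<union> vars q"
proof
  fix v
  assume "v \<in> vars (p * q)"
  then obtain t where t: "t \<in> Poly_Mapping.keys (p * q)" "v \<in> Poly_Mapping.keys t"
    by (auto simp: vars_def)
  then obtain a b where "t = a + b" "a \<in> Poly_Mapping.keys p" "b \<in> Poly_Mapping.keys q"
    using keys_mult[of p q] by blast
  then show "v \<in> vars p \<union> vars q"
    using t keys_add[of a b] by (auto simp: vars_def)
qed

lemma polyring_add: "p \<in> polyring n m \<Longrightarrow> q \<in> polyring n m \<Longrightarrow> p + q \<in> polyring n m"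
  using vars_add[of p q] by (auto simp: polyring_def)

lemma polyring_diff: "p \<in> polyring n m \<Longrightarrow> q \<in> polyring n m \<Longrightarrow> p - q \<in> polyring n m"
  using vars_diff[of p q] by (auto simp: polyring_def)

lemma polyring_uminus: "p \<in> polyring n m \<Longrightarrow> - p \<in> polyring n m"
  by (simp add: polyring_def vars_def)

lemma polyring_mult: "p \<in> polyring n m \<Longrightarrow> q \<in> polyring n m \<Longrightarrow> p * q \<in> polyring n m"
  using vars_mult[of p q] by (auto simp: polyring_def)

lemma polyring_hcomp: "p \<in> polyring n m \<Longrightarrow> hcomp d p \<in> polyring n m"
  by (auto simp: polyring_def vars_def keys_hcomp)

lemma polyring_zero: "0 \<in> polyring n m"
  by (simp add: polyring_def vars_def)

lemma polyring_one: "1 \<in> polyring n m"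
  by (simp add: polyring_def vars_def)

definition agrees_with_lower_degree ::
    "nat \<Rightarrow> nat \<Rightarrow> (nat \<Rightarrow> nat \<Rightarrow> complex) set \<Rightarrow> nat \<Rightarrow> cpoly \<Rightarrow> bool" where
  "agrees_with_lower_degree n m Z d p \<longleftrightarrow>
     (\<exists>q\<in>polyring n m. (\<forall>t\<in>Poly_Mapping.keys q. tdeg t < d) \<and> (\<forall>A\<in>Z. peval p A = peval q A))"

lemma agrees_with_lower_degree_zero: "agrees_with_lower_degree n m Z d 0"
  unfolding agrees_with_lower_degree_def by (rule bexI[of _ 0]) (auto simp: polyring_zero)

lemma agrees_with_lower_degree_add:
  assumes "agrees_with_lower_degree n m Z d p" "agrees_with_lower_degree n m Z d p'"
  shows "agrees_with_lower_degree n m Z d (p + p')"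
proof -
  obtain q where q: "q \<in> polyring n m" "\<forall>t\<in>Poly_Mapping.keys q. tdeg t < d" "\<forall>A\<in>Z. peval p A = peval q A"
    using assms(1) by (auto simp: agrees_with_lower_degree_def)
  obtain q' where q': "q' \<in> polyring n m" "\<forall>t\<in>Poly_Mapping.keys q'. tdeg t < d" "\<forall>A\<in>Z. peval p' A = peval q' A"
    using assms(2) by (auto simp: agrees_with_lower_degree_def)
  show ?thesis
    unfolding agrees_with_lower_degree_def
    using q q' keys_add[of q q'] by (intro bexI[of _ "q + q'"]) (auto simp: peval_add polyring_add)
qed

text \<open>The degree-d part of q * top_comp f is q' * top_comp f, where q' is the degree-(d - pdeg f)
  part of q; on Z it equals -q' * (f - top_comp f), which has lower degree.\<close>
lemma hcomp_times_top_comp_agrees_with_lower_degree: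
  assumes f: "f \<in> vanishing_ideal n m Z" and q: "q \<in> polyring n m"
  shows "agrees_with_lower_degree n m Z d (hcomp d (q * top_comp f))"
proof (cases "pdeg f \<le> d")
  case True
  define e where "e = pdeg f"
  define g where "g = top_comp f"
  define q' where "q' = hcomp (d - e) q"
  define h where "h = f - g"
  have f_ring: "f \<in> polyring n m" and f_van: "\<forall>A\<in>Z. peval f A = 0"
    using f by (auto simp: vanishing_ideal_def)
  have g: "g = hcomp e f" by (simp add: g_def e_def top_comp_eq_hcomp)
  have "h \<in> polyring n m" "q' \<in> polyring n m"
    using f_ring q by (simp_all add: h_def g polyring_diff polyring_hcomp q'_def)
  then have ring: "- (q' * h) \<in> polyring n m"
    by (simp add: polyring_mult polyring_uminus)
  have h_deg: "tdeg t < e" if "t \<in> Poly_Mapping.keys h" for t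
  proof -
    have "Poly_Mapping.lookup h t = (if tdeg t = e then 0 else Poly_Mapping.lookup f t)"
      by (simp add: h_def g lookup_minus lookup_hcomp)
    with that have "tdeg t \<noteq> e" "t \<in> Poly_Mapping.keys f"
      by (auto simp: in_keys_iff split: if_splits)
    then show ?thesis using tdeg_le_pdeg[of t f] e_def by simp
  qed
  have deg: "tdeg t < d" if "t \<in> Poly_Mapping.keys (- (q' * h))" for t
  proof -
    from that have "t \<in> Poly_Mapping.keys (q' * h)" by simp
    then obtain a b where "t = a + b" "a \<in> Poly_Mapping.keys q'" "b \<in> Poly_Mapping.keys h"
      using keys_mult[of q' h] by blast
    moreover have "tdeg b < e" using h_deg \<open>b \<in> Poly_Mapping.keys h\<close> .
    ultimately show ?thesis
      using True by (auto simp: q'_def e_def keys_hcomp tdeg_add)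
  qed
  have "peval (q' * g) A = peval (- (q' * h)) A" if "A \<in> Z" for A
  proof -
    have "q' * g = q' * f - q' * h" by (simp add: h_def algebra_simps)
    then show ?thesis using f_van that by (simp add: peval_diff peval_mult peval_uminus)
  qed
  moreover have "hcomp d (q * g) = q' * g"
    using hcomp_times_homogeneous[OF homogeneous_of_hcomp, of d q e f] True
    by (simp add: g q'_def e_def)
  ultimately show ?thesis
    unfolding agrees_with_lower_degree_def g_def using ring deg by metis
next
  case False
  then show ?thesis
    using hcomp_times_homogeneous[OF homogeneous_of_hcomp, of d q "pdeg f" f]
    by (simp add: top_comp_eq_hcomp agrees_with_lower_degree_zero)
qed

lemma gr_ideal_imp_agrees_with_lower_degree:
  assumes "p \<in> hom_piece n m d" "p \<in> gr_ideal n m Z"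
  shows "agrees_with_lower_degree n m Z d p"
proof -
  have "agrees_with_lower_degree n m Z d (hcomp d p)"
    using assms(2) unfolding gr_ideal_def
  proof (induction rule: ideal_gen.induct)
    case zero
    then show ?case by (simp add: agrees_with_lower_degree_zero)
  next
    case (gen g q)
    then show ?case by (auto intro: hcomp_times_top_comp_agrees_with_lower_degree)
  next
    case (add a b)
    then show ?case by (simp add: hcomp_add agrees_with_lower_degree_add)
  qed
  then show ?thesis
    using assms(1) by (simp add: hom_piece_def hcomp_homogeneous)
qed

text \<open>p is the top component of p - q \<in> I(Z).\<close>
lemma agrees_with_lower_degree_imp_gr_ideal:
  assumes p: "p \<in> hom_piece n m d" and "agrees_with_lower_degree n m Z d p"
  shows "p \<in> gr_ideal n m Z"
proof (cases "p = 0")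
  case True
  then show ?thesis by (simp add: gr_ideal_def ideal_gen.zero)
next
  case False
  obtain q where q: "q \<in> polyring n m" "\<forall>t\<in>Poly_Mapping.keys q. tdeg t < d"
      "\<forall>A\<in>Z. peval p A = peval q A"
    using assms(2) by (auto simp: agrees_with_lower_degree_def)
  have p_ring: "p \<in> polyring n m" and p_hom: "homogeneous_of d p"
    using p by (auto simp: hom_piece_def)
  define f where "f = p - q"
  have lookup_f: "Poly_Mapping.lookup f s
      = (if tdeg s = d then Poly_Mapping.lookup p s else - Poly_Mapping.lookup q s)" for s
  proof -
    have "d \<le> tdeg s \<Longrightarrow> Poly_Mapping.lookup q s = 0"
      using q(2) by (force simp: in_keys_iff)
    moreover have "tdeg s \<noteq> d \<Longrightarrow> Poly_Mapping.lookup p s = 0"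
      using p_hom by (force simp: homogeneous_of_def in_keys_iff)
    ultimately show ?thesis by (simp add: f_def lookup_minus)
  qed
  have f_van: "f \<in> vanishing_ideal n m Z"
    using q p_ring by (simp add: vanishing_ideal_def f_def polyring_diff peval_diff)
  obtain s where s: "Poly_Mapping.lookup p s \<noteq> 0"
    using False poly_mapping_eqI[of p 0] by auto
  have s_deg: "tdeg s = d"
    using s p_hom by (force simp: homogeneous_of_def in_keys_iff)
  then have s_f: "s \<in> Poly_Mapping.keys f"
    using s lookup_f by (simp add: in_keys_iff)
  have "tdeg t \<le> d" if "t \<in> Poly_Mapping.keys f" for t
    using that lookup_f[of t] q(2) by (force simp: in_keys_iff split: if_splits)
  then have "pdeg f = d"
    unfolding pdeg_def using s_f s_deg by (intro Max_eqI) auto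
  then have "top_comp f = p"
    using p_hom
    by (intro poly_mapping_eqI) (auto simp: top_comp_eq_hcomp lookup_hcomp lookup_f homogeneous_of_def in_keys_iff)
  with f_van s_f have "p \<in> top_comp ` (vanishing_ideal n m Z - {0})"
    by force
  then have "1 * p \<in> ideal_gen n m (top_comp ` (vanishing_ideal n m Z - {0}))"
    by (rule ideal_gen.gen) (simp add: polyring_one)
  then show ?thesis by (simp add: gr_ideal_def)
qed

lemma hom_piece_gr_ideal_iff:
  "p \<in> hom_piece n m d \<Longrightarrow> p \<in> gr_ideal n m Z \<longleftrightarrow> agrees_with_lower_degree n m Z d p"
  using gr_ideal_imp_agrees_with_lower_degree agrees_with_lower_degree_imp_gr_ideal by blast

definition partial_matching :: "(nat \<times> nat) set \<Rightarrow> bool" where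
  "partial_matching B \<longleftrightarrow> inj_on fst B \<and> inj_on snd B"

definition matchings :: "nat \<Rightarrow> nat \<Rightarrow> nat \<Rightarrow> (nat \<times> nat) set set" where
  "matchings n m l = {B. B \<subseteq> {..<n} \<times> {..<m} \<and> card B = l \<and> partial_matching B}"

definition indicator_matrix :: "(nat \<times> nat) set \<Rightarrow> nat \<Rightarrow> nat \<Rightarrow> complex" where
  "indicator_matrix B i j = (if (i, j) \<in> B then 1 else 0)"

lemma finite_matchings: "B \<in> matchings n m l \<Longrightarrow> finite B"
  unfolding matchings_def by (auto intro: finite_subset)

lemma matchings_subset: "B \<in> matchings n m l \<Longrightarrow> B' \<subseteq> B \<Longrightarrow> B' \<in> matchings n m (card B')"
  by (auto simp: matchings_def partial_matching_def intro: inj_on_subset)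

lemma Zset_eq_image_indicator_matrix: "Zset n m l = indicator_matrix ` matchings n m l"
proof
  show "Zset n m l \<subseteq> indicator_matrix ` matchings n m l"
  proof
    fix A
    assume A: "A \<in> Zset n m l"
    define B where "B = {(i, j). i < n \<and> j < m \<and> A i j = 1}"
    have "A i j = indicator_matrix B i j" for i j
      using A by (auto simp: Zset_def matrices_def indicator_matrix_def B_def)
    moreover have "partial_matching B"
    proof -
      have rows: "\<forall>i j j'. A i j = 1 \<and> A i j' = 1 \<longrightarrow> j = j'"
        and cols: "\<forall>i i' j. A i j = 1 \<and> A i' j = 1 \<longrightarrow> i = i'"
        using A by (simp_all add: Zset_def)
      show ?thesis
        unfolding partial_matching_def B_def
        by (intro conjI inj_onI) (auto intro: rows[rule_format, OF conjI] cols[rule_format, OF conjI])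
    qed
    then have "B \<in> matchings n m l"
      using A by (auto simp: Zset_def matchings_def B_def)
    ultimately show "A \<in> indicator_matrix ` matchings n m l" by blast
  qed
next
  show "indicator_matrix ` matchings n m l \<subseteq> Zset n m l"
  proof
    fix A
    assume "A \<in> indicator_matrix ` matchings n m l"
    then obtain B where B: "B \<subseteq> {..<n} \<times> {..<m}" "card B = l" "partial_matching B"
      and A: "A = indicator_matrix B"
      by (auto simp: matchings_def)
    have "{(i, j). i < n \<and> j < m \<and> A i j = 1} = B"
      using B(1) by (auto simp: A indicator_matrix_def)
    moreover have "j = j'" if "(i, j) \<in> B" "(i, j') \<in> B" for i j j'
      using inj_onD[of fst B, OF _ _ that] B(3) by (simp add: partial_matching_def)
    moreover have "i = i'" if "(i, j) \<in> B" "(i', j) \<in> B" for i i' j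
      using inj_onD[of snd B, OF _ _ that] B(3) by (simp add: partial_matching_def)
    ultimately show "A \<in> Zset n m l"
      using B(1,2) by (auto simp: Zset_def matrices_def A indicator_matrix_def)
  qed
qed

definition support_coeff :: "cpoly \<Rightarrow> (nat \<times> nat) set \<Rightarrow> complex" where
  "support_coeff p S = (\<Sum>t\<in>{t\<in>Poly_Mapping.keys p. Poly_Mapping.keys t = S}. Poly_Mapping.lookup p t)"

definition subset_sum :: "('a set \<Rightarrow> complex) \<Rightarrow> 'a set \<Rightarrow> complex" where
  "subset_sum c B = (\<Sum>S\<in>Pow B. c S)"

lemma subset_sum_diff: "subset_sum (\<lambda>S. c S - c' S) B = subset_sum c B - subset_sum c' B"
  by (simp add: subset_sum_def sum_subtractf)

lemma support_coeff_eq_0: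
  assumes "\<forall>t\<in>Poly_Mapping.keys p. tdeg t < card S"
  shows "support_coeff p S = 0"
proof -
  have "{t\<in>Poly_Mapping.keys p. Poly_Mapping.keys t = S} = {}"
    using assms card_keys_le_tdeg not_le by blast
  then show ?thesis unfolding support_coeff_def by (metis sum.empty)
qed

lemma eval_mono_indicator_matrix:
  "eval_mono t (indicator_matrix B) = (if Poly_Mapping.keys t \<subseteq> B then 1 else 0)"
proof (cases "Poly_Mapping.keys t \<subseteq> B")
  case True
  then have "indicator_matrix B (fst v) (snd v) ^ Poly_Mapping.lookup t v = 1"
    if "v \<in> Poly_Mapping.keys t" for v
    using that by (auto simp: indicator_matrix_def)
  with True show ?thesis by (simp add: eval_mono_def)
next
  case False
  then obtain v where v: "v \<in> Poly_Mapping.keys t" "v \<notin> B" by auto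
  then have "indicator_matrix B (fst v) (snd v) ^ Poly_Mapping.lookup t v = 0"
    by (simp add: indicator_matrix_def in_keys_iff)
  with v False show ?thesis
    unfolding eval_mono_def by (auto intro: prod_zero)
qed

lemma peval_indicator_matrix:
  assumes "finite B"
  shows "peval p (indicator_matrix B) = subset_sum (support_coeff p) B"
proof -
  let ?T = "{t\<in>Poly_Mapping.keys p. Poly_Mapping.keys t \<subseteq> B}"
  have "peval p (indicator_matrix B) = (\<Sum>t\<in>Poly_Mapping.keys p.
      if Poly_Mapping.keys t \<subseteq> B then Poly_Mapping.lookup p t else 0)"
    unfolding peval_eq_sum_eval_mono eval_mono_indicator_matrix by (intro sum.cong) auto
  also have "\<dots> = (\<Sum>t\<in>?T. Poly_Mapping.lookup p t)"
    by (simp add: sum.inter_filter)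
  also have "\<dots> = (\<Sum>S\<in>Pow B. \<Sum>t\<in>{t\<in>?T. Poly_Mapping.keys t = S}. Poly_Mapping.lookup p t)"
    by (rule sum.group[symmetric]) (use assms in auto)
  also have "\<dots> = subset_sum (support_coeff p) B"
    unfolding subset_sum_def support_coeff_def by (intro sum.cong refl arg_cong2[where f = sum]) auto
  finally show ?thesis .
qed

definition mono_of_set :: "(nat \<times> nat) set \<Rightarrow> mono" where
  "mono_of_set S = (\<Sum>v\<in>S. Poly_Mapping.single v 1)"

lemma lookup_mono_of_set:
  "finite S \<Longrightarrow> Poly_Mapping.lookup (mono_of_set S) v = (if v \<in> S then 1 else 0)"
  by (simp add: mono_of_set_def lookup_sum lookup_single when_def sum.delta')

lemma keys_mono_of_set: "finite S \<Longrightarrow> Poly_Mapping.keys (mono_of_set S) = S"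
  by (auto simp: in_keys_iff lookup_mono_of_set split: if_splits)

lemma tdeg_mono_of_set: "finite S \<Longrightarrow> tdeg (mono_of_set S) = card S"
  by (simp add: tdeg_def keys_mono_of_set lookup_mono_of_set)

lemma low_degree_poly_with_subset_sums:
  assumes b: "\<forall>S. d \<le> card S \<longrightarrow> b S = 0"
  obtains q where "q \<in> polyring n m" "\<forall>t\<in>Poly_Mapping.keys q. tdeg t < d"
    "\<And>B. B \<in> matchings n m l \<Longrightarrow> peval q (indicator_matrix B) = subset_sum b B"
proof -
  define F where "F = {S. S \<subseteq> {..<n} \<times> {..<m} \<and> card S < d}"
  have "finite F" unfolding F_def
    by (rule finite_subset[of _ "Pow ({..<n} \<times> {..<m})"]) auto
  have finite_F: "S \<in> F \<Longrightarrow> finite S" for S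
    unfolding F_def by (auto intro: finite_subset)
  define q where "q = (\<Sum>S\<in>F. Poly_Mapping.single (mono_of_set S) (b S))"
  have keys_q: "\<exists>S\<in>F. t = mono_of_set S" if "t \<in> Poly_Mapping.keys q" for t
    using that keys_sum[of "\<lambda>S. Poly_Mapping.single (mono_of_set S) (b S)" F]
    by (auto simp: q_def split: if_splits)
  have "vars q \<subseteq> {..<n} \<times> {..<m}"
  proof
    fix v
    assume "v \<in> vars q"
    then obtain t where t: "t \<in> Poly_Mapping.keys q" "v \<in> Poly_Mapping.keys t"
      by (auto simp: vars_def)
    then obtain S where S: "S \<in> F" "t = mono_of_set S"
      using keys_q by blast
    with finite_F t(2) have "v \<in> S"
      by (simp add: keys_mono_of_set)
    with S(1) show "v \<in> {..<n} \<times> {..<m}"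
      by (auto simp: F_def)
  qed
  then have "q \<in> polyring n m"
    by (simp add: polyring_def)
  moreover have "\<forall>t\<in>Poly_Mapping.keys q. tdeg t < d"
  proof
    fix t
    assume "t \<in> Poly_Mapping.keys q"
    then obtain S where S: "S \<in> F" "t = mono_of_set S"
      using keys_q by blast
    with finite_F have "tdeg t = card S"
      by (simp add: tdeg_mono_of_set)
    with S(1) show "tdeg t < d"
      by (simp add: F_def)
  qed
  moreover have "peval q (indicator_matrix B) = subset_sum b B"
    if B: "B \<in> matchings n m l" for B
  proof -
    have "finite B" "B \<subseteq> {..<n} \<times> {..<m}"
      using finite_matchings[OF B] B by (simp_all add: matchings_def)
    have "peval q (indicator_matrix B) = (\<Sum>S\<in>F. b S * eval_mono (mono_of_set S) (indicator_matrix B))"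
      by (simp add: q_def peval_sum peval_single)
    also have "\<dots> = (\<Sum>S\<in>F. if S \<subseteq> B then b S else 0)"
      by (intro sum.cong refl) (simp add: eval_mono_indicator_matrix keys_mono_of_set finite_F)
    also have "\<dots> = (\<Sum>S\<in>{S\<in>F. S \<subseteq> B}. b S)"
      by (simp add: sum.inter_filter[OF \<open>finite F\<close>])
    also have "\<dots> = (\<Sum>S\<in>{S\<in>Pow B. card S < d}. b S)"
      using \<open>B \<subseteq> _\<close> by (intro sum.cong) (auto simp: F_def)
    also have "\<dots> = subset_sum b B"
      unfolding subset_sum_def
      by (rule sum.mono_neutral_left) (use \<open>finite B\<close> b not_less in auto)
    finally show ?thesis .
  qed
  ultimately show ?thesis
    using that by blast
qed

lemma agrees_with_lower_degree_Zset_iff: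
  "agrees_with_lower_degree n m (Zset n m l) d p \<longleftrightarrow>
     (\<exists>b. (\<forall>S. d \<le> card S \<longrightarrow> b S = 0) \<and>
          (\<forall>B\<in>matchings n m l. subset_sum (support_coeff p) B = subset_sum b B))"
proof
  assume "agrees_with_lower_degree n m (Zset n m l) d p"
  then obtain q where q: "\<forall>t\<in>Poly_Mapping.keys q. tdeg t < d"
      "\<forall>A\<in>Zset n m l. peval p A = peval q A"
    by (auto simp: agrees_with_lower_degree_def)
  have "support_coeff q S = 0" if "d \<le> card S" for S
    using q(1) that by (intro support_coeff_eq_0) auto
  moreover have "subset_sum (support_coeff p) B = subset_sum (support_coeff q) B"
    if B: "B \<in> matchings n m l" for B
  proof -
    have "indicator_matrix B \<in> Zset n m l"
      using B by (simp add: Zset_eq_image_indicator_matrix)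
    then show ?thesis
      using q(2) peval_indicator_matrix[OF finite_matchings[OF B]] by metis
  qed
  ultimately show "\<exists>b. (\<forall>S. d \<le> card S \<longrightarrow> b S = 0) \<and>
      (\<forall>B\<in>matchings n m l. subset_sum (support_coeff p) B = subset_sum b B)"
    by blast
next
  assume "\<exists>b. (\<forall>S. d \<le> card S \<longrightarrow> b S = 0) \<and>
      (\<forall>B\<in>matchings n m l. subset_sum (support_coeff p) B = subset_sum b B)"
  then obtain b where b: "\<forall>S. d \<le> card S \<longrightarrow> b S = 0"
      "\<forall>B\<in>matchings n m l. subset_sum (support_coeff p) B = subset_sum b B"
    by blast
  obtain q where q: "q \<in> polyring n m" "\<forall>t\<in>Poly_Mapping.keys q. tdeg t < d"
      "\<And>B. B \<in> matchings n m l \<Longrightarrow> peval q (indicator_matrix B) = subset_sum b B"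
    using low_degree_poly_with_subset_sums[OF b(1)] by blast
  have "peval p (indicator_matrix B) = peval q (indicator_matrix B)" if "B \<in> matchings n m l" for B
    using b(2) q(3) that peval_indicator_matrix[OF finite_matchings[OF that], of p] by simp
  with q(1,2) show "agrees_with_lower_degree n m (Zset n m l) d p"
    unfolding agrees_with_lower_degree_def Zset_eq_image_indicator_matrix
    by (intro bexI[of _ q]) auto
qed

definition has_top_layer :: "nat \<Rightarrow> ('a set \<Rightarrow> complex) \<Rightarrow> ('a set \<Rightarrow> complex) \<Rightarrow> bool" where
  "has_top_layer d \<kappa> c \<longleftrightarrow> (\<forall>S. card S = d \<longrightarrow> c S = \<kappa> S) \<and> (\<forall>S. d < card S \<longrightarrow> c S = 0)"

definition cancellable :: "nat \<Rightarrow> nat \<Rightarrow> nat \<Rightarrow> nat \<Rightarrow> ((nat \<times> nat) set \<Rightarrow> complex) \<Rightarrow> bool" where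
  "cancellable n m l d \<kappa> \<longleftrightarrow> (\<exists>c. has_top_layer d \<kappa> c \<and> (\<forall>B\<in>matchings n m l. subset_sum c B = 0))"

lemma hom_piece_gr_ideal_Zset_iff:
  assumes p: "p \<in> hom_piece n m d"
  shows "p \<in> gr_ideal n m (Zset n m l) \<longleftrightarrow> cancellable n m l d (support_coeff p)"
proof -
  let ?\<kappa> = "support_coeff p"
  have top: "?\<kappa> S = 0" if "d < card S" for S
    using p that by (intro support_coeff_eq_0) (simp add: hom_piece_def homogeneous_of_def)
  have "(\<exists>b. (\<forall>S. d \<le> card S \<longrightarrow> b S = 0) \<and> (\<forall>B\<in>matchings n m l. subset_sum ?\<kappa> B = subset_sum b B))
      \<longleftrightarrow> cancellable n m l d ?\<kappa>"
  proof
    assume "\<exists>b. (\<forall>S. d \<le> card S \<longrightarrow> b S = 0) \<and> (\<forall>B\<in>matchings n m l. subset_sum ?\<kappa> B = subset_sum b B)"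
    then obtain b where "\<forall>S. d \<le> card S \<longrightarrow> b S = 0"
        "\<forall>B\<in>matchings n m l. subset_sum ?\<kappa> B = subset_sum b B"
      by blast
    then have "has_top_layer d ?\<kappa> (\<lambda>S. ?\<kappa> S - b S)"
        "\<forall>B\<in>matchings n m l. subset_sum (\<lambda>S. ?\<kappa> S - b S) B = 0"
      using top by (auto simp: has_top_layer_def subset_sum_diff)
    then show "cancellable n m l d ?\<kappa>"
      unfolding cancellable_def by blast
  next
    assume "cancellable n m l d ?\<kappa>"
    then obtain c where "has_top_layer d ?\<kappa> c" "\<forall>B\<in>matchings n m l. subset_sum c B = 0"
      by (auto simp: cancellable_def)
    then have "\<forall>S. d \<le> card S \<longrightarrow> ?\<kappa> S - c S = 0"
        "\<forall>B\<in>matchings n m l. subset_sum ?\<kappa> B = subset_sum (\<lambda>S. ?\<kappa> S - c S) B"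
      using top by (auto simp: has_top_layer_def subset_sum_diff le_less)
    then show "\<exists>b. (\<forall>S. d \<le> card S \<longrightarrow> b S = 0) \<and> (\<forall>B\<in>matchings n m l. subset_sum ?\<kappa> B = subset_sum b B)"
      by (intro exI[of _ "\<lambda>S. ?\<kappa> S - c S"]) simp
  qed
  with p show ?thesis
    by (simp add: hom_piece_gr_ideal_iff agrees_with_lower_degree_Zset_iff)
qed

definition sum_subsets_of_card :: "nat \<Rightarrow> ('a set \<Rightarrow> complex) \<Rightarrow> 'a set \<Rightarrow> complex" where
  "sum_subsets_of_card d \<psi> B = (\<Sum>Y | Y \<subseteq> B \<and> card Y = d. \<psi> Y)"

lemma card_supersets_of_card:
  assumes "finite B" "S \<subseteq> B" "card S \<le> d"
  shows "card {Y. S \<subseteq> Y \<and> Y \<subseteq> B \<and> card Y = d} = (card B - card S) choose (d - card S)"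
proof -
  have "finite S" using assms finite_subset by blast
  have "bij_betw (\<lambda>Y. Y - S) {Y. S \<subseteq> Y \<and> Y \<subseteq> B \<and> card Y = d} {Z. Z \<subseteq> B - S \<and> card Z = d - card S}"
  proof (rule bij_betw_byWitness[where f' = "\<lambda>Z. Z \<union> S"])
    show "(\<lambda>Y. Y - S) ` {Y. S \<subseteq> Y \<and> Y \<subseteq> B \<and> card Y = d} \<subseteq> {Z. Z \<subseteq> B - S \<and> card Z = d - card S}"
      using assms(1) \<open>finite S\<close> by (auto simp: card_Diff_subset dest: finite_subset)
    show "(\<lambda>Z. Z \<union> S) ` {Z. Z \<subseteq> B - S \<and> card Z = d - card S} \<subseteq> {Y. S \<subseteq> Y \<and> Y \<subseteq> B \<and> card Y = d}"
    proof clarify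
      fix Z
      assume Z: "Z \<subseteq> B - S" "card Z = d - card S"
      then have "card (Z \<union> S) = card Z + card S"
        using assms(1) \<open>finite S\<close> by (intro card_Un_disjoint) (auto dest: finite_subset)
      with Z assms show "S \<subseteq> Z \<union> S \<and> Z \<union> S \<subseteq> B \<and> card (Z \<union> S) = d"
        by auto
    qed
  qed auto
  then have "card {Y. S \<subseteq> Y \<and> Y \<subseteq> B \<and> card Y = d} = card {Z. Z \<subseteq> B - S \<and> card Z = d - card S}"
    by (rule bij_betw_same_card)
  also have "\<dots> = (card B - card S) choose (d - card S)"
    using assms \<open>finite S\<close> by (simp add: n_subsets card_Diff_subset)
  finally show ?thesis .
qed

text \<open>Each S \<subseteq> B with |S| \<le> d lies in exactly C(|B| - |S|, d - |S|) of the d-subsets of B.\<close>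
lemma subset_sum_eq_sum_subsets_of_card:
  assumes B: "finite B" and d: "d \<le> card B" and c: "\<forall>S. d < card S \<longrightarrow> c S = 0"
  shows "subset_sum c B
    = sum_subsets_of_card d (subset_sum (\<lambda>S. c S / of_nat ((card B - card S) choose (d - card S)))) B"
proof -
  let ?\<beta> = "\<lambda>S. of_nat ((card B - card S) choose (d - card S)) :: complex"
  let ?Y = "{Y. Y \<subseteq> B \<and> card Y = d}"
  have "finite ?Y" using B by (auto intro: finite_subset[of _ "Pow B"])
  have "sum_subsets_of_card d (subset_sum (\<lambda>S. c S / ?\<beta> S)) B
      = (\<Sum>Y\<in>?Y. \<Sum>S\<in>{S\<in>Pow B. S \<subseteq> Y}. c S / ?\<beta> S)"
    unfolding sum_subsets_of_card_def subset_sum_def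
    by (intro sum.cong refl arg_cong2[where f = sum]) auto
  also have "\<dots> = (\<Sum>S\<in>Pow B. \<Sum>Y\<in>{Y\<in>?Y. S \<subseteq> Y}. c S / ?\<beta> S)"
    by (rule sum.swap_restrict) (use \<open>finite ?Y\<close> B in auto)
  also have "\<dots> = subset_sum c B"
    unfolding subset_sum_def
  proof (rule sum.cong)
    fix S
    assume S: "S \<in> Pow B"
    show "(\<Sum>Y\<in>{Y\<in>?Y. S \<subseteq> Y}. c S / ?\<beta> S) = c S"
    proof (cases "card S \<le> d")
      case True
      have "{Y\<in>?Y. S \<subseteq> Y} = {Y. S \<subseteq> Y \<and> Y \<subseteq> B \<and> card Y = d}" by auto
      then have "card {Y\<in>?Y. S \<subseteq> Y} = (card B - card S) choose (d - card S)"
        using card_supersets_of_card[OF B _ True] S by simp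
      moreover have "?\<beta> S \<noteq> 0"
        using True d card_mono[OF B, of S] S by (simp add: binomial_eq_0_iff)
      ultimately show ?thesis by simp
    next
      case False
      then show ?thesis using c by simp
    qed
  qed simp
  finally show ?thesis ..
qed

lemma cancellable_iff_sum_subsets_of_card:
  assumes "d \<le> l"
  shows "cancellable n m l d \<kappa> \<longleftrightarrow>
    (\<exists>c. has_top_layer d \<kappa> c \<and> (\<forall>B\<in>matchings n m l. sum_subsets_of_card d (subset_sum c) B = 0))"
proof -
  define \<beta> where "\<beta> S = (of_nat ((l - card S) choose (d - card S)) :: complex)"
    for S :: "(nat \<times> nat) set"
  have \<beta>_nonzero: "\<beta> S \<noteq> 0" if "card S \<le> d" for S
    using that assms by (simp add: \<beta>_def binomial_eq_0_iff)
  have \<beta>_top: "\<beta> S = 1" if "card S = d" for S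
    using that by (simp add: \<beta>_def)
  have matching: "finite B \<and> d \<le> card B \<and> card B = l" if "B \<in> matchings n m l" for B
    using finite_matchings[OF that] that assms by (simp add: matchings_def)
  show ?thesis
  proof
    assume "cancellable n m l d \<kappa>"
    then obtain c where c: "has_top_layer d \<kappa> c" "\<forall>B\<in>matchings n m l. subset_sum c B = 0"
      by (auto simp: cancellable_def)
    have "has_top_layer d \<kappa> (\<lambda>S. c S / \<beta> S)"
      using c(1) \<beta>_top by (simp add: has_top_layer_def)
    moreover have "sum_subsets_of_card d (subset_sum (\<lambda>S. c S / \<beta> S)) B = 0"
      if "B \<in> matchings n m l" for B
      using subset_sum_eq_sum_subsets_of_card[of B d c] c matching[OF that] that
      by (simp add: has_top_layer_def \<beta>_def)
    ultimately show "\<exists>c. has_top_layer d \<kappa> c \<and>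
        (\<forall>B\<in>matchings n m l. sum_subsets_of_card d (subset_sum c) B = 0)"
      by blast
  next
    assume "\<exists>c. has_top_layer d \<kappa> c \<and>
        (\<forall>B\<in>matchings n m l. sum_subsets_of_card d (subset_sum c) B = 0)"
    then obtain c where c: "has_top_layer d \<kappa> c"
        "\<forall>B\<in>matchings n m l. sum_subsets_of_card d (subset_sum c) B = 0"
      by blast
    have c': "has_top_layer d \<kappa> (\<lambda>S. c S * \<beta> S)"
      using c(1) \<beta>_top by (simp add: has_top_layer_def)
    have "(\<lambda>S. c S * \<beta> S / \<beta> S) = c"
      using c(1) \<beta>_nonzero by (force simp: has_top_layer_def not_le)
    then have "subset_sum (\<lambda>S. c S * \<beta> S) B = 0" if "B \<in> matchings n m l" for B
      using subset_sum_eq_sum_subsets_of_card[of B d "\<lambda>S. c S * \<beta> S"] c' c(2) matching[OF that] that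
      by (simp add: has_top_layer_def \<beta>_def)
    with c' show "cancellable n m l d \<kappa>"
      unfolding cancellable_def by blast
  qed
qed

lemma sum_sum_subsets_of_card_Diff_singleton:
  assumes "finite B"
  shows "(\<Sum>x\<in>B. sum_subsets_of_card d \<psi> (B - {x})) = of_nat (card B - d) * sum_subsets_of_card d \<psi> B"
proof -
  let ?Y = "{Y. Y \<subseteq> B \<and> card Y = d}"
  have "finite ?Y" using assms by (auto intro: finite_subset[of _ "Pow B"])
  have "(\<Sum>x\<in>B. sum_subsets_of_card d \<psi> (B - {x})) = (\<Sum>x\<in>B. \<Sum>Y\<in>{Y\<in>?Y. x \<notin> Y}. \<psi> Y)"
    unfolding sum_subsets_of_card_def by (intro sum.cong refl arg_cong2[where f = sum]) auto
  also have "\<dots> = (\<Sum>Y\<in>?Y. \<Sum>x\<in>{x\<in>B. x \<notin> Y}. \<psi> Y)"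
    by (rule sum.swap_restrict) (use \<open>finite ?Y\<close> assms in auto)
  also have "\<dots> = (\<Sum>Y\<in>?Y. of_nat (card B - d) * \<psi> Y)"
  proof (rule sum.cong)
    fix Y
    assume Y: "Y \<in> ?Y"
    then have "{x\<in>B. x \<notin> Y} = B - Y" "finite Y"
      using assms by (auto dest: finite_subset)
    with Y have "card {x\<in>B. x \<notin> Y} = card B - d"
      by (simp add: card_Diff_subset)
    then show "(\<Sum>x\<in>{x\<in>B. x \<notin> Y}. \<psi> Y) = of_nat (card B - d) * \<psi> Y"
      by simp
  qed simp
  also have "\<dots> = of_nat (card B - d) * sum_subsets_of_card d \<psi> B"
    by (simp add: sum_subsets_of_card_def sum_distrib_left)
  finally show ?thesis .
qed

lemma sum_subsets_of_card_vanishing_Suc: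
  assumes "d \<le> l" and vanishing: "\<forall>B\<in>matchings n m l. sum_subsets_of_card d \<psi> B = 0"
  shows "\<forall>B\<in>matchings n m (Suc l). sum_subsets_of_card d \<psi> B = 0"
proof
  fix B
  assume B: "B \<in> matchings n m (Suc l)"
  then have "finite B" "card B = Suc l"
    using finite_matchings[OF B] by (simp_all add: matchings_def)
  have "B - {x} \<in> matchings n m l" if "x \<in> B" for x
    using matchings_subset[OF B, of "B - {x}"] that \<open>finite B\<close> \<open>card B = Suc l\<close> by auto
  then have "of_nat (card B - d) * sum_subsets_of_card d \<psi> B = 0"
    using sum_sum_subsets_of_card_Diff_singleton[OF \<open>finite B\<close>, of d \<psi>] vanishing by simp
  moreover have "card B - d \<noteq> 0"
    using assms(1) \<open>card B = Suc l\<close> by simp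
  ultimately show "sum_subsets_of_card d \<psi> B = 0"
    by simp
qed

lemma sum_subsets_of_card_vanishing_add:
  assumes "d \<le> l" and "\<forall>B\<in>matchings n m l. sum_subsets_of_card d \<psi> B = 0"
  shows "\<forall>B\<in>matchings n m (l + k). sum_subsets_of_card d \<psi> B = 0"
proof (induction k)
  case 0
  then show ?case using assms(2) by simp
next
  case (Suc k)
  then show ?case
    using sum_subsets_of_card_vanishing_Suc[of d "l + k"] assms(1) by simp
qed

lemma sum_supersets_alternating:
  assumes "finite S" "U \<subset> S"
  shows "(\<Sum>T | T \<subseteq> S \<and> U \<subseteq> T. (-1) ^ card T) = (0 :: 'a :: ring_1)"
proof (rule sum_alternating_cancels)
  show "finite {T. T \<subseteq> S \<and> U \<subseteq> T}"
    using assms(1) by (auto intro: finite_subset[of _ "Pow S"])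
  show "card {T \<in> {T. T \<subseteq> S \<and> U \<subseteq> T}. even (card T)}
      = card {T \<in> {T. T \<subseteq> S \<and> U \<subseteq> T}. odd (card T)}"
    using card_subsupersets_even_odd[OF assms] by (simp add: conj_assoc)
qed

text \<open>Finite difference of order |E| > d: a d-subset Y of A \<union> E misses some point of E, and the
  subsets F of E with Y \<subseteq> A \<union> F, i.e. the supersets of Y \<inter> E, carry alternating signs summing to 0.\<close>
lemma alternating_sum_sum_subsets_of_card:
  assumes "finite A" "finite E" "A \<inter> E = {}" "d < card E"
  shows "(\<Sum>F\<in>Pow E. (-1) ^ card F * sum_subsets_of_card d \<psi> (A \<union> F)) = 0"
proof -
  let ?Y = "{Y. Y \<subseteq> A \<union> E \<and> card Y = d}"
  have "finite ?Y" using assms by (auto intro: finite_subset[of _ "Pow (A \<union> E)"])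
  have "(\<Sum>F\<in>Pow E. (-1) ^ card F * sum_subsets_of_card d \<psi> (A \<union> F))
      = (\<Sum>F\<in>Pow E. \<Sum>Y\<in>{Y\<in>?Y. Y \<subseteq> A \<union> F}. (-1) ^ card F * \<psi> Y)"
    unfolding sum_subsets_of_card_def sum_distrib_left
    by (intro sum.cong refl arg_cong2[where f = sum]) auto
  also have "\<dots> = (\<Sum>Y\<in>?Y. \<Sum>F\<in>{F\<in>Pow E. Y \<subseteq> A \<union> F}. (-1) ^ card F * \<psi> Y)"
    by (rule sum.swap_restrict) (use \<open>finite ?Y\<close> assms in auto)
  also have "\<dots> = (\<Sum>Y\<in>?Y. (\<Sum>F | F \<subseteq> E \<and> Y \<inter> E \<subseteq> F. (-1) ^ card F) * \<psi> Y)"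
  proof (rule sum.cong)
    fix Y
    assume "Y \<in> ?Y"
    then have "{F\<in>Pow E. Y \<subseteq> A \<union> F} = {F. F \<subseteq> E \<and> Y \<inter> E \<subseteq> F}"
      using assms(3) by auto
    then show "(\<Sum>F\<in>{F\<in>Pow E. Y \<subseteq> A \<union> F}. (-1) ^ card F * \<psi> Y)
        = (\<Sum>F | F \<subseteq> E \<and> Y \<inter> E \<subseteq> F. (-1) ^ card F) * \<psi> Y"
      by (simp add: sum_distrib_right)
  qed simp
  also have "\<dots> = 0"
  proof (rule sum.neutral, rule ballI)
    fix Y
    assume Y: "Y \<in> ?Y"
    then have "finite Y"
      using assms by (auto dest: finite_subset)
    then have "card (Y \<inter> E) < card E"
      using Y assms(4) card_mono[of Y "Y \<inter> E"] by auto
    then have "Y \<inter> E \<subset> E"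
      by auto
    then have "(\<Sum>F | F \<subseteq> E \<and> Y \<inter> E \<subseteq> F. (-1) ^ card F) = (0 :: complex)"
      by (rule sum_supersets_alternating[OF assms(2)])
    then show "(\<Sum>F | F \<subseteq> E \<and> Y \<inter> E \<subseteq> F. (-1) ^ card F) * \<psi> Y = 0"
      by simp
  qed
  finally show ?thesis .
qed

lemma matching_extension:
  assumes A: "A \<in> matchings n m r" and "r + k \<le> n" "r + k \<le> m"
  obtains E where "A \<inter> E = {}" "card E = k" "A \<union> E \<in> matchings n m (r + k)"
proof -
  have A_grid: "A \<subseteq> {..<n} \<times> {..<m}" and "card A = r" "inj_on fst A" "inj_on snd A"
    using A by (auto simp: matchings_def partial_matching_def)
  have "finite A" using finite_matchings[OF A] .
  have "card (fst ` A) \<le> r" "fst ` A \<subseteq> {..<n}"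
    using card_image_le[OF \<open>finite A\<close>, of fst] \<open>card A = r\<close> A_grid by auto
  then have "k \<le> card ({..<n} - fst ` A)"
    using assms(2) by (simp add: card_Diff_subset finite_subset)
  then obtain R where R: "R \<subseteq> {..<n} - fst ` A" "card R = k"
    by (meson obtain_subset_with_card_n)
  have "card (snd ` A) \<le> r" "snd ` A \<subseteq> {..<m}"
    using card_image_le[OF \<open>finite A\<close>, of snd] \<open>card A = r\<close> A_grid by auto
  then have "k \<le> card ({..<m} - snd ` A)"
    using assms(3) by (simp add: card_Diff_subset finite_subset)
  then obtain C where C: "C \<subseteq> {..<m} - snd ` A" "card C = k"
    by (meson obtain_subset_with_card_n)
  have "finite R" "finite C"
    using R(1) C(1) by (auto dest: finite_subset)
  then obtain f where f: "bij_betw f R C"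
    using finite_same_card_bij R(2) C(2) by metis
  define E where "E = (\<lambda>i. (i, f i)) ` R"
  have fst_E: "fst ` E = R" and snd_E: "snd ` E = C"
    using bij_betw_imp_surj_on[OF f] by (force simp: E_def)+
  have "inj_on fst E"
    by (auto simp: E_def inj_on_def)
  moreover have "inj_on snd E"
    using bij_betw_imp_inj_on[OF f] by (auto simp: E_def inj_on_def)
  moreover have "fst ` A \<inter> fst ` E = {}" "snd ` A \<inter> snd ` E = {}"
    using R(1) C(1) fst_E snd_E by auto
  ultimately have "partial_matching (A \<union> E)"
    using \<open>inj_on fst A\<close> \<open>inj_on snd A\<close>
    unfolding partial_matching_def inj_on_Un by blast
  moreover have "A \<inter> E = {}"
    using \<open>fst ` A \<inter> fst ` E = {}\<close> by blast
  moreover have "card E = k"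
    using R(2) by (simp add: E_def card_image inj_on_def)
  moreover have "E \<subseteq> {..<n} \<times> {..<m}"
    using R(1) C(1) fst_E snd_E by force
  ultimately show ?thesis
    using that A_grid \<open>card A = r\<close> \<open>finite A\<close> \<open>finite R\<close>
    by (simp add: matchings_def card_Un_disjoint E_def)
qed

lemma sum_subsets_of_card_vanishing_pred:
  assumes "d \<le> Suc r" "r + d + 1 \<le> n" "r + d + 1 \<le> m"
    and vanishing: "\<forall>B\<in>matchings n m (Suc r). sum_subsets_of_card d \<psi> B = 0"
  shows "\<forall>A\<in>matchings n m r. sum_subsets_of_card d \<psi> A = 0"
proof
  fix A
  assume A: "A \<in> matchings n m r"
  obtain E where E: "A \<inter> E = {}" "card E = Suc d" "A \<union> E \<in> matchings n m (r + Suc d)"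
    using matching_extension[OF A, of "Suc d"] assms(2,3) by auto
  have "finite A" "card A = r"
    using finite_matchings[OF A] A by (simp_all add: matchings_def)
  have "finite E"
    using E(2) card_ge_0_finite by force
  have "sum_subsets_of_card d \<psi> (A \<union> F) = 0" if F: "F \<in> Pow E - {{}}" for F
  proof -
    have "finite F" "card F \<noteq> 0"
      using F \<open>finite E\<close> by (auto dest: finite_subset)
    moreover have "card (A \<union> F) = card A + card F"
      using F E(1) \<open>finite A\<close> \<open>finite F\<close> by (intro card_Un_disjoint) auto
    ultimately have "card (A \<union> F) = Suc r + (card F - 1)"
      using \<open>card A = r\<close> by arith
    moreover have "A \<union> F \<in> matchings n m (card (A \<union> F))"
      using F by (intro matchings_subset[OF E(3)]) auto
    ultimately show ?thesis
      using sum_subsets_of_card_vanishing_add[OF assms(1) vanishing] by simp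
  qed
  then have "(\<Sum>F\<in>Pow E. (-1) ^ card F * sum_subsets_of_card d \<psi> (A \<union> F))
      = sum_subsets_of_card d \<psi> A"
    using \<open>finite E\<close> by (subst sum.remove[of _ "{}"]) auto
  then show "sum_subsets_of_card d \<psi> A = 0"
    using alternating_sum_sum_subsets_of_card[OF \<open>finite A\<close> \<open>finite E\<close> E(1)] E(2) by simp
qed

lemma cancellable_Suc_iff:
  assumes "d \<le> r" "r + d + 1 \<le> n" "r + d + 1 \<le> m"
  shows "cancellable n m (Suc r) d \<kappa> \<longleftrightarrow> cancellable n m r d \<kappa>"
proof -
  have "d \<le> Suc r" using assms(1) by simp
  show ?thesis
    unfolding cancellable_iff_sum_subsets_of_card[OF \<open>d \<le> r\<close>]
      cancellable_iff_sum_subsets_of_card[OF \<open>d \<le> Suc r\<close>]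
    using sum_subsets_of_card_vanishing_Suc[OF \<open>d \<le> r\<close>]
      sum_subsets_of_card_vanishing_pred[OF \<open>d \<le> Suc r\<close> assms(2,3)]
    by blast
qed

lemma Rd_iso_if_gr_ideals_agree:
  assumes "\<forall>p\<in>hom_piece n m d. p \<in> gr_ideal n m Z2 \<longleftrightarrow> p \<in> gr_ideal n m Z1"
  shows "Rd_iso n m d Z1 Z2"
proof -
  have "0 \<in> gr_ideal n m Z2"
    by (simp add: gr_ideal_def ideal_gen.zero)
  moreover from this have "\<forall>q\<in>hom_piece n m d. \<exists>p\<in>hom_piece n m d. p - q \<in> gr_ideal n m Z2"
    by (metis diff_self)
  ultimately show ?thesis
    unfolding Rd_iso_def Let_def using assms by (intro exI[of _ "\<lambda>p. p"]) auto
qed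

theorem mainTheorem18:
  fixes n m r d :: nat
  assumes "0 < n" and "0 < m"
    and "d \<le> r" and "r < min m n"
    and "d \<le> min m n - r - 1"
  shows "Rd_iso n m d (Zset n m r) (Zset n m (r + 1))"
proof -
  have "r + d + 1 \<le> n" "r + d + 1 \<le> m"
    using assms by auto
  then have "cancellable n m (Suc r) d \<kappa> \<longleftrightarrow> cancellable n m r d \<kappa>" for \<kappa>
    using cancellable_Suc_iff assms(3) by blast
  then show ?thesis
    by (intro Rd_iso_if_gr_ideals_agree) (simp add: hom_piece_gr_ideal_Zset_iff)
qed

end
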